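(* (Working in $\mathbf{ZF}$.) Let $X$ and $Y$ be weakly normal generalized topological spaces such that the Wallman spaces $\mathcal W(X,\mathrm{Cl}_X)$ and $\mathcal W(Y,\mathrm{Cl}_Y)$ are compact. Then a mapping $f:X\to Y$ has a weakly continuous Wallman extension if and only if $f$ is w-continuous.
   Context: A generalized topological space (gts) $(X,\mathrm{Op}_X,\mathrm{Cov}_X)$ is in the sense of Delfs–Knebusch ($\mathrm{Op}_X$ contains $\emptyset,X$, closed under finite unions and intersections; $\mathrm{Cov}_X$ a collection of families of open sets satisfying the Delfs–Knebusch axioms). $\mathrm{Cl}_X$ = complements of open sets. $X$ is weakly normal if any two disjoint sets, each a singleton or in $\mathrm{Cl}_X$, lie in disjoint open sets. $\mathcal W(X,\mathrm{Cl}_X)$ is the set of ultrafilters (maximal filters) in $\mathrm{Cl}_X$ with the topology whose closed base is $\{[A]:A\in\mathrm{Cl}_X\}$, $[A]=\{p:A\in p\}$; $w_X(x)=\{A\in\mathrm{Cl}_X:x\in A\}$ (and $x$ is identified with $w_X(x)$). A Wallman extension of $f:X\to Y$ is a mapping $\hat f:\mathcal W(X,\mathrm{Cl}_X)\to\mathcal W(Y,\mathrm{Cl}_Y)$ with $\hat f(w_X(x))=w_Y(f(x))$ for all $x\in X$; it is weakly continuous if it is continuous with respect to the Wallman space topologies. For families $\mathcal U,\mathcal V$, $\mathcal U\preceq\mathcal V$ means every member of $\mathcal U$ lies in a member of $\mathcal V$ and $\bigcup\mathcal U=\bigcup\mathcal V$; $f^{-1}(\mathcal V)=\{f^{-1}(V):V\in\mathcal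 V\}$. $f$ is w-continuous if for every finite (equivalently, essentially finite) family $\mathcal V\subseteq\mathrm{Op}_Y$ covering $Y$ there is a finite (essentially finite) family $\mathcal U\subseteq\mathrm{Op}_X$ covering $X$ with $\mathcal U\preceq f^{-1}(\mathcal V)$. *)

theory Defs
  imports "HOL-Analysis.Analysis"
begin

text \<open>Generalized topological spaces (Delfs--Knebusch / Piekosz--Wajch axioms).
  A gts is a triple (X, Op, Cov) with Op a family of subsets of X and Cov a family
  of subfamilies of Op.\<close>

definition gts :: "'a set \<Rightarrow> 'a set set \<Rightarrow> 'a set set set \<Rightarrow> bool" where
  "gts X Op Cov \<longleftrightarrow>
     Op \<subseteq> Pow X \<and> Cov \<subseteq> Pow Op \<and>
     {} \<in> Op \<and> X \<in> Op \<and>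
     (\<forall>U\<in>Op. \<forall>V\<in>Op. U \<union> V \<in> Op \<and> U \<inter> V \<in> Op) \<and>
     (\<forall>\<U>. finite \<U> \<and> \<U> \<subseteq> Op \<longrightarrow> \<U> \<in> Cov) \<and>
     (\<forall>\<U>\<in>Cov. \<forall>V\<in>Op. (\<lambda>U. U \<inter> V) ` \<U> \<in> Cov) \<and>
     (\<forall>\<U>\<in>Cov. \<forall>\<V>. (\<forall>U\<in>\<U>. \<V> U \<in> Cov \<and> \<Union>(\<V> U) = U) \<longrightarrow> (\<Union>U\<in>\<U>. \<V> U) \<in> Cov) \<and>
     (\<forall>\<U>\<in>Cov. \<forall>\<V>. \<V> \<subseteq> Op \<and> \<Union>\<V> = \<Union>\<U> \<and> (\<forall>U\<in>\<U>. (\<lambda>V. V \<inter> U) ` \<V> \<in> Cov)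
          \<longrightarrow> \<V> \<in> Cov) \<and>
     (\<forall>\<U>\<in>Cov. \<forall>V. V \<subseteq> \<Union>\<U> \<and> (\<forall>U\<in>\<U>. V \<inter> U \<in> Op) \<longrightarrow> V \<in> Op)"

definition Cl :: "'a set \<Rightarrow> 'a set set \<Rightarrow> 'a set set" where
  "Cl X Op = {X - U | U. U \<in> Op}"

definition weakly_normal :: "'a set \<Rightarrow> 'a set set \<Rightarrow> bool" where
  "weakly_normal X Op \<longleftrightarrow>
     (\<forall>A B. ((\<exists>x\<in>X. A = {x}) \<or> A \<in> Cl X Op) \<and> ((\<exists>x\<in>X. B = {x}) \<or> B \<in> Cl X Op) \<and>
            A \<inter> B = {} \<longrightarrow> (\<exists>U\<in>Op. \<exists>V\<in>Op. A \<subseteq> U \<and> B \<subseteq> V \<and> U \<inter> V = {}))"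

definition filter_in :: "'a set set \<Rightarrow> 'a set set \<Rightarrow> bool" where
  "filter_in L p \<longleftrightarrow> p \<subseteq> L \<and> p \<noteq> {} \<and> {} \<notin> p \<and>
     (\<forall>A\<in>p. \<forall>B\<in>p. A \<inter> B \<in> p) \<and> (\<forall>A\<in>p. \<forall>B\<in>L. A \<subseteq> B \<longrightarrow> B \<in> p)"

definition ultrafilter_in :: "'a set set \<Rightarrow> 'a set set \<Rightarrow> bool" where
  "ultrafilter_in L p \<longleftrightarrow> filter_in L p \<and> (\<forall>q. filter_in L q \<and> p \<subseteq> q \<longrightarrow> q = p)"

definition wallman_points :: "'a set \<Rightarrow> 'a set set \<Rightarrow> 'a set set set" where
  "wallman_points X Op = {p. ultrafilter_in (Cl X Op) p}"

definition wallman_bracket :: "'a set \<Rightarrow> 'a set set \<Rightarrow> 'a set \<Rightarrow> 'a set set set" where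
  "wallman_bracket X Op A = {p \<in> wallman_points X Op. A \<in> p}"

definition wallman_topology :: "'a set \<Rightarrow> 'a set set \<Rightarrow> 'a set set topology" where
  "wallman_topology X Op =
     topology_generated_by {wallman_points X Op - wallman_bracket X Op A | A. A \<in> Cl X Op}"

definition w_map :: "'a set \<Rightarrow> 'a set set \<Rightarrow> 'a \<Rightarrow> 'a set set" where
  "w_map X Op x = {A \<in> Cl X Op. x \<in> A}"

definition wallman_extension ::
  "'a set \<Rightarrow> 'a set set \<Rightarrow> 'b set \<Rightarrow> 'b set set \<Rightarrow> ('a \<Rightarrow> 'b) \<Rightarrow> ('a set set \<Rightarrow> 'b set set) \<Rightarrow> bool" where
  "wallman_extension X OpX Y OpY f F \<longleftrightarrow>
     (\<forall>p\<in>wallman_points X OpX. F p \<in> wallman_points Y OpY) \<and>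
     (\<forall>x\<in>X. F (w_map X OpX x) = w_map Y OpY (f x))"

definition weakly_continuous_wallman_extension ::
  "'a set \<Rightarrow> 'a set set \<Rightarrow> 'b set \<Rightarrow> 'b set set \<Rightarrow> ('a \<Rightarrow> 'b) \<Rightarrow> ('a set set \<Rightarrow> 'b set set) \<Rightarrow> bool" where
  "weakly_continuous_wallman_extension X OpX Y OpY f F \<longleftrightarrow>
     wallman_extension X OpX Y OpY f F \<and>
     continuous_map (wallman_topology X OpX) (wallman_topology Y OpY) F"

definition fam_refines :: "'a set set \<Rightarrow> 'a set set \<Rightarrow> bool" where
  "fam_refines \<U> \<V> \<longleftrightarrow> (\<forall>U\<in>\<U>. \<exists>V\<in>\<V>. U \<subseteq> V) \<and> \<Union>\<U> = \<Union>\<V>"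

definition w_continuous ::
  "'a set \<Rightarrow> 'a set set \<Rightarrow> 'b set \<Rightarrow> 'b set set \<Rightarrow> ('a \<Rightarrow> 'b) \<Rightarrow> bool" where
  "w_continuous X OpX Y OpY f \<longleftrightarrow>
     (\<forall>\<V>. finite \<V> \<and> \<V> \<subseteq> OpY \<and> \<Union>\<V> = Y \<longrightarrow>
        (\<exists>\<U>. finite \<U> \<and> \<U> \<subseteq> OpX \<and> \<Union>\<U> = X \<and>
              fam_refines \<U> ((\<lambda>V. {x \<in> X. f x \<in> V}) ` \<V>)))"

end

theory Submission
  imports Defs
begin

text \<open>A continuous extension F pulls back the basic open sets W - [Y - V] of a finite open
  cover of Y to an open cover of the compact space W(X); a finite refinement by basic open sets
  W - [A] gives closed sets A of X whose complements cover X and refine the preimages of the V.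
  Conversely, for w-continuous f the closed sets of Y containing the image of a member of an
  ultrafilter p form a filter, which compactness of W(Y) extends to an ultrafilter F(p).
  Applying w-continuity to two-element covers obtained by weak normality of Y shows that this
  extension is unique, whence F(w(x)) = w(f(x)), and that each set {p. B \<notin> F(p)} is open.\<close>

section \<open>Closed sets and filters\<close>

lemma gts_opens:
  assumes "gts X Op Cov"
  shows "Op \<subseteq> Pow X" "{} \<in> Op" "X \<in> Op"
    and "U \<in> Op \<Longrightarrow> V \<in> Op \<Longrightarrow> U \<union> V \<in> Op"
    and "U \<in> Op \<Longrightarrow> V \<in> Op \<Longrightarrow> U \<inter> V \<in> Op"
proof -
  have "Op \<subseteq> Pow X" "{} \<in> Op" "X \<in> Op" "\<forall>U\<in>Op. \<forall>V\<in>Op. U \<union> V \<in> Op \<and> U \<inter> V \<in> Op"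
    using assms unfolding gts_def by simp_all
  then show "Op \<subseteq> Pow X" "{} \<in> Op" "X \<in> Op"
    and "U \<in> Op \<Longrightarrow> V \<in> Op \<Longrightarrow> U \<union> V \<in> Op"
    and "U \<in> Op \<Longrightarrow> V \<in> Op \<Longrightarrow> U \<inter> V \<in> Op"
    by blast+
qed

lemma gts_Union_open:
  assumes "gts X Op Cov" "finite \<U>" "\<U> \<subseteq> Op"
  shows "\<Union>\<U> \<in> Op"
  using assms(2,3)
  by (induction rule: finite_induct) (auto intro: gts_opens[OF assms(1)])

lemma mem_Cl_iff:
  assumes "gts X Op Cov"
  shows "A \<in> Cl X Op \<longleftrightarrow> A \<subseteq> X \<and> X - A \<in> Op"
proof
  assume "A \<in> Cl X Op"
  then obtain U where "U \<in> Op" "A = X - U" unfolding Cl_def by blast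
  moreover have "U \<subseteq> X" using gts_opens(1)[OF assms] \<open>U \<in> Op\<close> by blast
  ultimately show "A \<subseteq> X \<and> X - A \<in> Op" by (simp add: Diff_Diff_Int inf.absorb2)
qed (auto simp: Cl_def)

lemma Diff_in_Cl: "U \<in> Op \<Longrightarrow> X - U \<in> Cl X Op"
  unfolding Cl_def by blast

lemma Cl_subset: "gts X Op Cov \<Longrightarrow> A \<in> Cl X Op \<Longrightarrow> A \<subseteq> X"
  by (simp add: mem_Cl_iff)

lemma Cl_empty: "gts X Op Cov \<Longrightarrow> {} \<in> Cl X Op"
  by (simp add: mem_Cl_iff gts_opens)

lemma Cl_top: "gts X Op Cov \<Longrightarrow> X \<in> Cl X Op"
  by (simp add: mem_Cl_iff gts_opens)

lemma Cl_Int: "gts X Op Cov \<Longrightarrow> A \<in> Cl X Op \<Longrightarrow> B \<in> Cl X Op \<Longrightarrow> A \<inter> B \<in> Cl X Op"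
  by (auto simp: mem_Cl_iff Diff_Int intro: gts_opens)

lemma Cl_Un: "gts X Op Cov \<Longrightarrow> A \<in> Cl X Op \<Longrightarrow> B \<in> Cl X Op \<Longrightarrow> A \<union> B \<in> Cl X Op"
  by (auto simp: mem_Cl_iff Diff_Un intro: gts_opens)

lemma weakly_normal_Cl:
  "weakly_normal X Op \<Longrightarrow> A \<in> Cl X Op \<Longrightarrow> B \<in> Cl X Op \<Longrightarrow> A \<inter> B = {} \<Longrightarrow>
    \<exists>U\<in>Op. \<exists>V\<in>Op. A \<subseteq> U \<and> B \<subseteq> V \<and> U \<inter> V = {}"
  unfolding weakly_normal_def by blast

lemma filter_inD:
  assumes "filter_in L p"
  shows "p \<subseteq> L" "{} \<notin> p" "\<exists>A. A \<in> p"
    and "A \<in> p \<Longrightarrow> B \<in> p \<Longrightarrow> A \<inter> B \<in> p"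
    and "A \<in> p \<Longrightarrow> B \<in> L \<Longrightarrow> A \<subseteq> B \<Longrightarrow> B \<in> p"
  using assms unfolding filter_in_def by auto

lemma filter_in_Int_nonempty: "filter_in L p \<Longrightarrow> A \<in> p \<Longrightarrow> B \<in> p \<Longrightarrow> A \<inter> B \<noteq> {}"
  by (metis filter_inD(2,4))

lemma filter_in_Inter:
  assumes "filter_in L p" "finite \<F>" "\<F> \<noteq> {}" "\<F> \<subseteq> p"
  shows "\<Inter>\<F> \<in> p"
  using assms(2-4)
  by (induction rule: finite_ne_induct) (auto intro: filter_inD(4)[OF assms(1)])

lemma ultrafilter_in_disjoint:
  assumes p: "ultrafilter_in L p" and "A \<in> L" "A \<notin> p"
    and L_Int: "\<And>C D. C \<in> L \<Longrightarrow> D \<in> L \<Longrightarrow> C \<inter> D \<in> L"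
  shows "\<exists>C\<in>p. C \<inter> A = {}"
proof (rule ccontr)
  assume meets: "\<not> (\<exists>C\<in>p. C \<inter> A = {})"
  have fp: "filter_in L p" using p unfolding ultrafilter_in_def by blast
  define q where "q = {D \<in> L. \<exists>C\<in>p. C \<inter> A \<subseteq> D}"
  have "filter_in L q" unfolding filter_in_def
  proof (intro conjI ballI impI)
    show "q \<subseteq> L" unfolding q_def by blast
    show "q \<noteq> {}" "{} \<notin> q" using meets filter_inD(1,3)[OF fp] unfolding q_def by blast+
  next
    fix D E assume "D \<in> q" "E \<in> q"
    then obtain C1 C2 where "C1 \<in> p" "C2 \<in> p" "C1 \<inter> A \<subseteq> D" "C2 \<inter> A \<subseteq> E" "D \<in> L" "E \<in> L"
      unfolding q_def by blast
    moreover have "C1 \<inter> C2 \<in> p" using filter_inD(4)[OF fp \<open>C1 \<in> p\<close> \<open>C2 \<in> p\<close>] .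
    ultimately show "D \<inter> E \<in> q" unfolding q_def using L_Int by blast
  qed (auto simp: q_def)
  moreover have "p \<subseteq> q" using filter_inD(1)[OF fp] unfolding q_def by blast
  ultimately have "q = p" using p unfolding ultrafilter_in_def by blast
  moreover have "A \<in> q" using filter_inD(3)[OF fp] \<open>A \<in> L\<close> unfolding q_def by blast
  ultimately show False using \<open>A \<notin> p\<close> by blast
qed

lemma ultrafilter_in_Un:
  assumes p: "ultrafilter_in L p" and "A \<in> L" "B \<in> L" "A \<union> B \<in> p"
    and L_Int: "\<And>C D. C \<in> L \<Longrightarrow> D \<in> L \<Longrightarrow> C \<inter> D \<in> L"
  shows "A \<in> p \<or> B \<in> p"
proof (rule ccontr)
  have fp: "filter_in L p" using p unfolding ultrafilter_in_def by blast
  assume "\<not> (A \<in> p \<or> B \<in> p)"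
  then obtain C D where "C \<in> p" "D \<in> p" "C \<inter> A = {}" "D \<inter> B = {}"
    using ultrafilter_in_disjoint[OF p _ _ L_Int] assms(2,3) by metis
  then have "C \<inter> D \<inter> (A \<union> B) \<in> p" "C \<inter> D \<inter> (A \<union> B) = {}"
    using filter_inD(4)[OF fp] \<open>A \<union> B \<in> p\<close> by blast+
  then show False using filter_inD(2)[OF fp] by simp
qed

section \<open>The Wallman space\<close>

lemma wallman_pointsD:
  assumes "gts X Op Cov" "p \<in> wallman_points X Op"
  shows "ultrafilter_in (Cl X Op) p" "filter_in (Cl X Op) p" "X \<in> p"
    and "A \<in> p \<Longrightarrow> A \<in> Cl X Op" "A \<in> p \<Longrightarrow> A \<subseteq> X"
proof -
  show u: "ultrafilter_in (Cl X Op) p" using assms(2) unfolding wallman_points_def by blast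
  then show f: "filter_in (Cl X Op) p" unfolding ultrafilter_in_def by blast
  show "A \<in> p \<Longrightarrow> A \<in> Cl X Op" using filter_inD(1)[OF f] by blast
  then show "A \<in> p \<Longrightarrow> A \<subseteq> X" using Cl_subset[OF assms(1)] by blast
  obtain A where "A \<in> p" using filter_inD(3)[OF f] by blast
  then show "X \<in> p"
    using filter_inD(1,5)[OF f] Cl_top[OF assms(1)] Cl_subset[OF assms(1)] by blast
qed

lemma wallman_points_disjoint:
  "gts X Op Cov \<Longrightarrow> p \<in> wallman_points X Op \<Longrightarrow> A \<in> Cl X Op \<Longrightarrow> A \<notin> p \<Longrightarrow> \<exists>C\<in>p. C \<inter> A = {}"
  by (metis ultrafilter_in_disjoint wallman_pointsD(1) Cl_Int)

lemma wallman_points_finite_cover: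
  assumes "gts X Op Cov" "p \<in> wallman_points X Op"
    and "finite \<V>" "\<V> \<subseteq> Op" "\<Union>\<V> = X"
  shows "\<exists>V\<in>\<V>. X - V \<notin> p"
proof (rule ccontr)
  have "X \<noteq> {}" using wallman_pointsD(2,3)[OF assms(1,2)] filter_inD(2) by metis
  then have "\<V> \<noteq> {}" using assms(5) by auto
  assume "\<not> (\<exists>V\<in>\<V>. X - V \<notin> p)"
  then have "(\<lambda>V. X - V) ` \<V> \<subseteq> p" by blast
  with \<open>\<V> \<noteq> {}\<close> have "\<Inter>((\<lambda>V. X - V) ` \<V>) \<in> p"
    using filter_in_Inter[OF wallman_pointsD(2)[OF assms(1,2)]
        finite_imageI[OF assms(3), of "\<lambda>V. X - V"]]
    by blast
  moreover have "\<Inter>((\<lambda>V. X - V) ` \<V>) = {}" using assms(5) \<open>\<V> \<noteq> {}\<close> by blast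
  ultimately show False using filter_inD(2)[OF wallman_pointsD(2)[OF assms(1,2)]] by simp
qed

text \<open>Weak normality separates a point from a closed set not containing it; this is what
  makes the principal filter of a point maximal.\<close>
lemma w_map_in_wallman_points:
  assumes "gts X Op Cov" "weakly_normal X Op" "x \<in> X"
  shows "w_map X Op x \<in> wallman_points X Op"
proof -
  have f: "filter_in (Cl X Op) (w_map X Op x)"
    unfolding filter_in_def w_map_def using Cl_top[OF assms(1)] Cl_Int[OF assms(1)] assms(3)
    by blast
  moreover have "q \<subseteq> w_map X Op x" if q: "filter_in (Cl X Op) q" "w_map X Op x \<subseteq> q" for q
  proof
    fix A assume "A \<in> q"
    then have A: "A \<in> Cl X Op" using filter_inD(1)[OF q(1)] by blast
    show "A \<in> w_map X Op x"
    proof (rule ccontr)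
      assume "A \<notin> w_map X Op x"
      then have "{x} \<inter> A = {}" using A unfolding w_map_def by blast
      then obtain U V where UV: "U \<in> Op" "V \<in> Op" "x \<in> U" "A \<subseteq> V" "U \<inter> V = {}"
        using assms(2,3) A unfolding weakly_normal_def by (metis insert_subset)
      then have "X - V \<in> q" using q(2) assms(3) Diff_in_Cl unfolding w_map_def by blast
      moreover have "A \<inter> (X - V) = {}" using UV by blast
      ultimately show False using filter_in_Int_nonempty[OF q(1) \<open>A \<in> q\<close>] by blast
    qed
  qed
  ultimately show ?thesis unfolding wallman_points_def ultrafilter_in_def by blast
qed

lemma topspace_wallman_topology:
  assumes "gts X Op Cov"
  shows "topspace (wallman_topology X Op) = wallman_points X Op"
proof -
  have "wallman_bracket X Op {} = {}"
    unfolding wallman_bracket_def wallman_points_def ultrafilter_in_def filter_in_def by blast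
  then have "wallman_points X Op \<in> {wallman_points X Op - wallman_bracket X Op A | A. A \<in> Cl X Op}"
    using Cl_empty[OF assms] by auto
  then show ?thesis
    unfolding wallman_topology_def topology_generated_by_topspace wallman_bracket_def by blast
qed

lemma openin_wallman_basic:
  "A \<in> Cl X Op \<Longrightarrow> openin (wallman_topology X Op) (wallman_points X Op - wallman_bracket X Op A)"
  unfolding wallman_topology_def by (rule topology_generated_by_Basis) blast

lemma closedin_wallman_bracket:
  assumes "gts X Op Cov" "A \<in> Cl X Op"
  shows "closedin (wallman_topology X Op) (wallman_bracket X Op A)"
proof -
  have "wallman_bracket X Op A \<subseteq> wallman_points X Op" unfolding wallman_bracket_def by blast
  then show ?thesis
    using openin_wallman_basic[OF assms(2)]
    unfolding closedin_def topspace_wallman_topology[OF assms(1)] by (simp add: Diff_Diff_Int Int_absorb1)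
qed

text \<open>The basic open sets are closed under finite intersections, because
  [A] \<union> [B] = [A \<union> B] for ultrafilters; hence they form a base.\<close>
lemma openin_wallman_topology_basic_nbhd:
  assumes "gts X Op Cov" "openin (wallman_topology X Op) S" "p \<in> S"
  shows "\<exists>A\<in>Cl X Op. A \<notin> p \<and> (\<forall>p'\<in>wallman_points X Op. A \<notin> p' \<longrightarrow> p' \<in> S)"
proof -
  let ?W = "wallman_points X Op"
  have "generate_topology_on {?W - wallman_bracket X Op A | A. A \<in> Cl X Op} S"
    using assms(2) unfolding wallman_topology_def openin_topology_generated_by_iff .
  then have "\<forall>p\<in>S. p \<in> ?W \<longrightarrow> (\<exists>A\<in>Cl X Op. A \<notin> p \<and> (\<forall>p'\<in>?W. A \<notin> p' \<longrightarrow> p' \<in> S))"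
  proof (induction rule: generate_topology_on.induct)
    case (Int a b)
    show ?case
    proof (intro ballI impI)
      fix p assume p: "p \<in> a \<inter> b" "p \<in> ?W"
      then obtain A B where A: "A \<in> Cl X Op" "A \<notin> p" "\<forall>p'\<in>?W. A \<notin> p' \<longrightarrow> p' \<in> a"
        and B: "B \<in> Cl X Op" "B \<notin> p" "\<forall>p'\<in>?W. B \<notin> p' \<longrightarrow> p' \<in> b"
        using Int.IH by blast
      have AB: "A \<union> B \<in> Cl X Op" using Cl_Un[OF assms(1) A(1) B(1)] .
      have "A \<union> B \<notin> p"
        using ultrafilter_in_Un[OF wallman_pointsD(1)[OF assms(1) p(2)] A(1) B(1) _ Cl_Int[OF assms(1)]]
          A(2) B(2) by blast
      moreover have "p' \<in> a \<inter> b" if "p' \<in> ?W" "A \<union> B \<notin> p'" for p'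
      proof -
        have "A \<notin> p'" "B \<notin> p'"
          using that filter_inD(5)[OF wallman_pointsD(2)[OF assms(1) that(1)] _ AB] by blast+
        then show ?thesis using A(3) B(3) that(1) by blast
      qed
      ultimately show "\<exists>C\<in>Cl X Op. C \<notin> p \<and> (\<forall>p'\<in>?W. C \<notin> p' \<longrightarrow> p' \<in> a \<inter> b)"
        using AB by blast
    qed
  next
    case (UN K)
    show ?case
    proof (intro ballI impI)
      fix p assume "p \<in> \<Union>K" "p \<in> ?W"
      then obtain k where "k \<in> K" "p \<in> k" by blast
      then obtain A where "A \<in> Cl X Op" "A \<notin> p" "\<forall>p'\<in>?W. A \<notin> p' \<longrightarrow> p' \<in> k"
        using UN.IH \<open>p \<in> ?W\<close> by blast
      then show "\<exists>A\<in>Cl X Op. A \<notin> p \<and> (\<forall>p'\<in>?W. A \<notin> p' \<longrightarrow> p' \<in> \<Union>K)"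
        using \<open>k \<in> K\<close> by blast
    qed
  next
    case (Basis s)
    then obtain A where "A \<in> Cl X Op" "s = ?W - wallman_bracket X Op A" by blast
    then show ?case unfolding wallman_bracket_def by blast
  qed simp
  moreover have "p \<in> ?W"
    using openin_subset[OF assms(2)] assms(3) topspace_wallman_topology[OF assms(1)] by blast
  ultimately show ?thesis using assms(3) by blast
qed


lemma w_map_in_wallman_bracket_iff:
  assumes "gts X Op Cov" "weakly_normal X Op" "x \<in> X" "A \<in> Cl X Op"
  shows "w_map X Op x \<in> wallman_bracket X Op A \<longleftrightarrow> x \<in> A"
  using w_map_in_wallman_points[OF assms(1-3)] assms(4)
  unfolding wallman_bracket_def w_map_def by blast

lemma continuous_map_wallman_topology_iff:
  assumes "gts X OpX CovX" "gts Y OpY CovY"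
    and F: "\<forall>p\<in>wallman_points X OpX. F p \<in> wallman_points Y OpY"
  shows "continuous_map (wallman_topology X OpX) (wallman_topology Y OpY) F \<longleftrightarrow>
    (\<forall>B\<in>Cl Y OpY. openin (wallman_topology X OpX) {p \<in> wallman_points X OpX. B \<notin> F p})"
proof -
  have preimage: "F -` (wallman_points Y OpY - wallman_bracket Y OpY B) \<inter> topspace (wallman_topology X OpX)
      = {p \<in> wallman_points X OpX. B \<notin> F p}" for B
    using F unfolding topspace_wallman_topology[OF assms(1)] wallman_bracket_def by blast
  have "\<Union>{wallman_points Y OpY - wallman_bracket Y OpY B | B. B \<in> Cl Y OpY}
      = topspace (wallman_topology Y OpY)"
    unfolding wallman_topology_def by simp
  also have "\<dots> = wallman_points Y OpY" by (rule topspace_wallman_topology[OF assms(2)])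
  finally have "F ` topspace (wallman_topology X OpX) \<subseteq>
      \<Union>{wallman_points Y OpY - wallman_bracket Y OpY B | B. B \<in> Cl Y OpY}"
    using F unfolding topspace_wallman_topology[OF assms(1)] by auto
  moreover have "(\<forall>U\<in>{wallman_points Y OpY - wallman_bracket Y OpY B | B. B \<in> Cl Y OpY}.
        openin (wallman_topology X OpX) (F -` U \<inter> topspace (wallman_topology X OpX))) \<longleftrightarrow>
      (\<forall>B\<in>Cl Y OpY. openin (wallman_topology X OpX) {p \<in> wallman_points X OpX. B \<notin> F p})"
    by (auto simp flip: preimage)
  ultimately show ?thesis
    unfolding wallman_topology_def[of Y OpY] continuous_on_generated_topo_iff by blast
qed

text \<open>Weak normality, through the points w(x), transfers the finite covering of W(X) back to X.\<close>
lemma compact_wallman_closed_refinement: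
  assumes "gts X Op Cov" "weakly_normal X Op" "compact_space (wallman_topology X Op)"
    and "\<forall>i\<in>I. openin (wallman_topology X Op) (S i)" "wallman_points X Op \<subseteq> (\<Union>i\<in>I. S i)"
  shows "\<exists>\<A>. finite \<A> \<and> \<A> \<subseteq> Cl X Op \<and> X \<inter> \<Inter>\<A> = {} \<and>
           (\<forall>A\<in>\<A>. \<exists>i\<in>I. wallman_points X Op - wallman_bracket X Op A \<subseteq> S i)"
proof -
  let ?W = "wallman_points X Op"
  let ?basic = "\<lambda>A. ?W - wallman_bracket X Op A"
  define \<B> where "\<B> = {A \<in> Cl X Op. \<exists>i\<in>I. ?basic A \<subseteq> S i}"
  have "?W \<subseteq> \<Union>(?basic ` \<B>)"
  proof
    fix p assume "p \<in> ?W"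
    then obtain i where "i \<in> I" "p \<in> S i" using assms(5) by blast
    then obtain A where "A \<in> Cl X Op" "A \<notin> p" "\<forall>p'\<in>?W. A \<notin> p' \<longrightarrow> p' \<in> S i"
      using openin_wallman_topology_basic_nbhd[OF assms(1)] assms(4) by blast
    then have "A \<in> \<B>" "p \<in> ?basic A"
      using \<open>i \<in> I\<close> \<open>p \<in> ?W\<close> unfolding \<B>_def wallman_bracket_def by blast+
    then show "p \<in> \<Union>(?basic ` \<B>)" by blast
  qed
  moreover have "\<forall>U\<in>?basic ` \<B>. openin (wallman_topology X Op) U"
    using openin_wallman_basic unfolding \<B>_def by blast
  ultimately obtain \<F> where "finite \<F>" "\<F> \<subseteq> ?basic ` \<B>" "?W \<subseteq> \<Union>\<F>"
    using assms(3)[unfolded compact_space_alt, rule_format, of "?basic ` \<B>"]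
    unfolding topspace_wallman_topology[OF assms(1)] by blast
  then obtain \<A> where \<A>: "\<A> \<subseteq> \<B>" "finite \<A>" "?W \<subseteq> \<Union>(?basic ` \<A>)"
    by (metis finite_subset_image)
  have "x \<notin> \<Inter>\<A>" if x: "x \<in> X" for x
  proof -
    obtain A where "A \<in> \<A>" "w_map X Op x \<notin> wallman_bracket X Op A"
      using \<A>(3) w_map_in_wallman_points[OF assms(1,2) x] by blast
    then show ?thesis
      using w_map_in_wallman_bracket_iff[OF assms(1,2) x] \<A>(1) unfolding \<B>_def by blast
  qed
  then show ?thesis using \<A>(1,2) unfolding \<B>_def by blast
qed

text \<open>The points w(y) witness the finite intersection property of the closed sets [B].\<close>
lemma compact_wallman_fip_ultrafilter:
  assumes "gts X Op Cov" "weakly_normal X Op" "compact_space (wallman_topology X Op)"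
    and \<B>: "\<B> \<subseteq> Cl X Op" and fip: "\<And>\<F>. finite \<F> \<Longrightarrow> \<F> \<subseteq> \<B> \<Longrightarrow> X \<inter> \<Inter>\<F> \<noteq> {}"
  shows "\<exists>q\<in>wallman_points X Op. \<B> \<subseteq> q"
proof -
  let ?W = "wallman_points X Op"
  define \<C> where "\<C> = insert ?W (wallman_bracket X Op ` \<B>)"
  have "closedin (wallman_topology X Op) C" if "C \<in> \<C>" for C
  proof -
    have "closedin (wallman_topology X Op) ?W"
      using closedin_topspace[of "wallman_topology X Op"]
      unfolding topspace_wallman_topology[OF assms(1)] .
    then show ?thesis
      using that closedin_wallman_bracket[OF assms(1)] \<B> unfolding \<C>_def by auto
  qed
  moreover have "\<Inter>\<G> \<noteq> {}" if "finite \<G>" "\<G> \<subseteq> \<C>" for \<G>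
  proof -
    have "\<G> - {?W} \<subseteq> wallman_bracket X Op ` \<B>" "finite (\<G> - {?W})"
      using that unfolding \<C>_def by auto
    then obtain \<F> where F: "\<F> \<subseteq> \<B>" "finite \<F>" "\<G> - {?W} = wallman_bracket X Op ` \<F>"
      by (meson finite_subset_image)
    obtain y where y: "y \<in> X" "y \<in> \<Inter>\<F>" using fip[OF F(2,1)] by blast
    have w: "w_map X Op y \<in> ?W" using w_map_in_wallman_points[OF assms(1,2) y(1)] .
    have "w_map X Op y \<in> wallman_bracket X Op B" if "B \<in> \<F>" for B
      using that F(1) \<B> y(2) w unfolding w_map_def wallman_bracket_def by blast
    then have "w_map X Op y \<in> \<Inter>\<G>" using F(3) w by blast
    then show ?thesis by blast
  qed
  ultimately have "\<Inter>\<C> \<noteq> {}"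
    using assms(3)[unfolded compact_space_fip, rule_format, of \<C>] by blast
  then obtain q where "q \<in> \<Inter>\<C>" by blast
  then show ?thesis unfolding \<C>_def wallman_bracket_def by blast
qed

lemma compact_wallman_filter_extends:
  assumes "gts X Op Cov" "weakly_normal X Op" "compact_space (wallman_topology X Op)"
    and \<F>: "filter_in (Cl X Op) \<F>" and B: "B \<in> Cl X Op" and meets: "\<forall>K\<in>\<F>. K \<inter> B \<noteq> {}"
  shows "\<exists>q\<in>wallman_points X Op. \<F> \<subseteq> q \<and> B \<in> q"
proof -
  obtain K where "K \<in> \<F>" using filter_inD(3)[OF \<F>] by blast
  then have "X \<in> \<F>"
    using filter_inD(1,5)[OF \<F>] Cl_top[OF assms(1)] Cl_subset[OF assms(1)] by blast
  have "X \<inter> \<Inter>\<G> \<noteq> {}" if "finite \<G>" "\<G> \<subseteq> insert B \<F>" for \<G>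
  proof -
    have "insert X (\<G> - {B}) \<subseteq> \<F>" using that(2) \<open>X \<in> \<F>\<close> by blast
    then have "\<Inter>(insert X (\<G> - {B})) \<in> \<F>"
      using filter_in_Inter[OF \<F>, of "insert X (\<G> - {B})"] that(1) by blast
    then have "\<Inter>(insert X (\<G> - {B})) \<inter> B \<noteq> {}" using meets by blast
    then show ?thesis by blast
  qed
  moreover have "insert B \<F> \<subseteq> Cl X Op" using filter_inD(1)[OF \<F>] B by blast
  ultimately obtain q where "q \<in> wallman_points X Op" "insert B \<F> \<subseteq> q"
    using compact_wallman_fip_ultrafilter[OF assms(1-3), of "insert B \<F>"] by blast
  then show ?thesis by blast
qed

section \<open>Wallman extensions\<close>

definition image_filter :: "'b set \<Rightarrow> 'b set set \<Rightarrow> ('a \<Rightarrow> 'b) \<Rightarrow> 'a set set \<Rightarrow> 'b set set" where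
  "image_filter Y OpY f p = {B \<in> Cl Y OpY. \<exists>A\<in>p. f ` A \<subseteq> B}"

text \<open>Under the hypotheses of the locale w_continuous_gts_map below, exactly one ultrafilter
  contains the image filter, so the choice is determined.\<close>
definition wallman_map :: "'b set \<Rightarrow> 'b set set \<Rightarrow> ('a \<Rightarrow> 'b) \<Rightarrow> 'a set set \<Rightarrow> 'b set set" where
  "wallman_map Y OpY f p = (SOME q. q \<in> wallman_points Y OpY \<and> image_filter Y OpY f p \<subseteq> q)"

locale gts_map =
  fixes X :: "'a set" and OpX :: "'a set set" and CovX :: "'a set set set"
    and Y :: "'b set" and OpY :: "'b set set" and CovY :: "'b set set set"
    and f :: "'a \<Rightarrow> 'b"
  assumes gts_X: "gts X OpX CovX" and gts_Y: "gts Y OpY CovY"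
    and maps_to: "\<forall>x\<in>X. f x \<in> Y"
begin

abbreviation "WX \<equiv> wallman_points X OpX"
abbreviation "WY \<equiv> wallman_points Y OpY"

lemma wallman_extension_basic_preimage:
  assumes normal_X: "weakly_normal X OpX" and F: "wallman_extension X OpX Y OpY f F"
    and A: "A \<in> Cl X OpX" and V: "V \<in> OpY"
    and sub: "WX - wallman_bracket X OpX A \<subseteq> {p \<in> WX. Y - V \<notin> F p}"
  shows "X - A \<subseteq> {x \<in> X. f x \<in> V}"
proof
  fix x assume x: "x \<in> X - A"
  then have "w_map X OpX x \<in> WX - wallman_bracket X OpX A"
    using w_map_in_wallman_points[OF gts_X normal_X] w_map_in_wallman_bracket_iff[OF gts_X normal_X _ A]
    by blast
  then have "Y - V \<notin> w_map Y OpY (f x)" using sub F x unfolding wallman_extension_def by auto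
  then show "x \<in> {x \<in> X. f x \<in> V}"
    using x maps_to Diff_in_Cl[OF V] unfolding w_map_def by blast
qed

lemma w_continuous_if_weakly_continuous_extension:
  assumes normal_X: "weakly_normal X OpX" and compact_X: "compact_space (wallman_topology X OpX)"
    and F: "weakly_continuous_wallman_extension X OpX Y OpY f F"
  shows "w_continuous X OpX Y OpY f"
  unfolding w_continuous_def
proof (intro allI impI)
  fix \<V> assume "finite \<V> \<and> \<V> \<subseteq> OpY \<and> \<Union>\<V> = Y"
  then have \<V>: "finite \<V>" "\<V> \<subseteq> OpY" "\<Union>\<V> = Y" by blast+
  have ext: "wallman_extension X OpX Y OpY f F" and F_WY: "\<forall>p\<in>WX. F p \<in> WY"
    and cont: "continuous_map (wallman_topology X OpX) (wallman_topology Y OpY) F"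
    using F unfolding weakly_continuous_wallman_extension_def wallman_extension_def by blast+
  let ?S = "\<lambda>V. {p \<in> WX. Y - V \<notin> F p}"
  have "\<forall>V\<in>\<V>. openin (wallman_topology X OpX) (?S V)"
    using cont \<V>(2) Diff_in_Cl[of _ OpY Y]
    unfolding continuous_map_wallman_topology_iff[OF gts_X gts_Y F_WY] by blast
  moreover have "WX \<subseteq> (\<Union>V\<in>\<V>. ?S V)"
  proof
    fix p assume "p \<in> WX"
    then obtain V where "V \<in> \<V>" "Y - V \<notin> F p"
      using wallman_points_finite_cover[OF gts_Y, of "F p" \<V>] F_WY \<V> by blast
    then show "p \<in> (\<Union>V\<in>\<V>. ?S V)" using \<open>p \<in> WX\<close> by blast
  qed
  ultimately obtain \<A> where \<A>: "finite \<A>" "\<A> \<subseteq> Cl X OpX" "X \<inter> \<Inter>\<A> = {}"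
    "\<forall>A\<in>\<A>. \<exists>V\<in>\<V>. WX - wallman_bracket X OpX A \<subseteq> ?S V"
    using compact_wallman_closed_refinement[OF gts_X normal_X compact_X, of \<V> ?S] by blast
  define \<U> where "\<U> = (\<lambda>A. X - A) ` \<A>"
  have "\<Union>\<U> = X" using \<A>(3) unfolding \<U>_def by blast
  moreover have "\<Union>((\<lambda>V. {x \<in> X. f x \<in> V}) ` \<V>) = X" using \<V>(3) maps_to by auto
  moreover have "\<exists>W\<in>(\<lambda>V. {x \<in> X. f x \<in> V}) ` \<V>. U \<subseteq> W" if U: "U \<in> \<U>" for U
  proof -
    obtain A where A: "A \<in> \<A>" "U = X - A" using U unfolding \<U>_def by blast
    obtain V where V: "V \<in> \<V>" "WX - wallman_bracket X OpX A \<subseteq> ?S V"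
      using bspec[OF \<A>(4) A(1)] by blast
    have "U \<subseteq> {x \<in> X. f x \<in> V}"
      using wallman_extension_basic_preimage[OF normal_X ext subsetD[OF \<A>(2) A(1)]
          subsetD[OF \<V>(2) V(1)] V(2)] A(2) by simp
    then show ?thesis using V(1) by blast
  qed
  ultimately have "fam_refines \<U> ((\<lambda>V. {x \<in> X. f x \<in> V}) ` \<V>)"
    unfolding fam_refines_def by simp
  moreover have "finite \<U>" using \<A>(1) unfolding \<U>_def by blast
  moreover have "\<U> \<subseteq> OpX" using \<A>(2) by (auto simp: \<U>_def mem_Cl_iff[OF gts_X])
  ultimately show "\<exists>\<U>. finite \<U> \<and> \<U> \<subseteq> OpX \<and> \<Union>\<U> = X \<and>
      fam_refines \<U> ((\<lambda>V. {x \<in> X. f x \<in> V}) ` \<V>)"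
    using \<open>\<Union>\<U> = X\<close> by blast
qed

lemma filter_in_image_filter:
  assumes p: "p \<in> WX"
  shows "filter_in (Cl Y OpY) (image_filter Y OpY f p)"
  unfolding filter_in_def
proof (intro conjI ballI impI)
  show "image_filter Y OpY f p \<subseteq> Cl Y OpY" unfolding image_filter_def by blast
  have "f ` X \<subseteq> Y" using maps_to by blast
  then have "Y \<in> image_filter Y OpY f p"
    using wallman_pointsD(3)[OF gts_X p] Cl_top[OF gts_Y] unfolding image_filter_def by blast
  then show "image_filter Y OpY f p \<noteq> {}" by blast
  show "{} \<notin> image_filter Y OpY f p"
  proof
    assume "{} \<in> image_filter Y OpY f p"
    then obtain A where "A \<in> p" "f ` A \<subseteq> {}" unfolding image_filter_def by blast
    then show False using filter_inD(2)[OF wallman_pointsD(2)[OF gts_X p]] by simp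
  qed
next
  fix K1 K2 assume "K1 \<in> image_filter Y OpY f p" "K2 \<in> image_filter Y OpY f p"
  then obtain A1 A2 where "A1 \<in> p" "A2 \<in> p" "f ` A1 \<subseteq> K1" "f ` A2 \<subseteq> K2"
    "K1 \<in> Cl Y OpY" "K2 \<in> Cl Y OpY" unfolding image_filter_def by blast
  moreover have "A1 \<inter> A2 \<in> p"
    using filter_inD(4)[OF wallman_pointsD(2)[OF gts_X p] \<open>A1 \<in> p\<close> \<open>A2 \<in> p\<close>] .
  moreover have "f ` (A1 \<inter> A2) \<subseteq> K1 \<inter> K2" using calculation by blast
  ultimately show "K1 \<inter> K2 \<in> image_filter Y OpY f p"
    unfolding image_filter_def using Cl_Int[OF gts_Y \<open>K1 \<in> Cl Y OpY\<close> \<open>K2 \<in> Cl Y OpY\<close>] by blast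
qed (auto simp: image_filter_def)

text \<open>w-continuity, applied to the two-element cover {G, Y - K}.\<close>
lemma w_continuous_open_between:
  assumes "w_continuous X OpX Y OpY f" and K: "K \<in> Cl Y OpY" and G: "G \<in> OpY" "K \<subseteq> G"
  shows "\<exists>U\<in>OpX. {x \<in> X. f x \<in> K} \<subseteq> U \<and> U \<subseteq> {x \<in> X. f x \<in> G}"
proof -
  have "Y - K \<in> OpY" "G \<subseteq> Y" using mem_Cl_iff[OF gts_Y] K gts_opens(1)[OF gts_Y] G(1) by blast+
  then have "finite {G, Y - K} \<and> {G, Y - K} \<subseteq> OpY \<and> \<Union>{G, Y - K} = Y" using G by auto
  from assms(1)[unfolded w_continuous_def, rule_format, OF this]
  obtain \<U> where \<U>: "finite \<U>" "\<U> \<subseteq> OpX" "\<Union>\<U> = X"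
    "fam_refines \<U> ((\<lambda>V. {x \<in> X. f x \<in> V}) ` {G, Y - K})"
    by blast
  define \<U>\<^sub>G where "\<U>\<^sub>G = {U \<in> \<U>. U \<subseteq> {x \<in> X. f x \<in> G}}"
  have "\<Union>\<U>\<^sub>G \<in> OpX" using \<U>(1,2) unfolding \<U>\<^sub>G_def by (intro gts_Union_open[OF gts_X]) auto
  moreover have "x \<in> \<Union>\<U>\<^sub>G" if x: "x \<in> X" "f x \<in> K" for x
  proof -
    obtain U where "U \<in> \<U>" "x \<in> U" using \<U>(3) x(1) by blast
    moreover have "\<not> U \<subseteq> {x \<in> X. f x \<in> Y - K}" using \<open>x \<in> U\<close> x(2) by blast
    ultimately show ?thesis using \<U>(4) unfolding fam_refines_def \<U>\<^sub>G_def by blast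
  qed
  moreover have "\<Union>\<U>\<^sub>G \<subseteq> {x \<in> X. f x \<in> G}" unfolding \<U>\<^sub>G_def by blast
  ultimately show ?thesis by blast
qed

lemma image_filter_separates:
  assumes "w_continuous X OpX Y OpY f" and p: "p \<in> WX"
    and K: "K \<in> Cl Y OpY" and G: "G \<in> OpY" "K \<subseteq> G"
  shows "(\<exists>C\<in>p. f ` C \<subseteq> G) \<or> (\<exists>C\<in>p. f ` C \<subseteq> Y - K)"
proof -
  obtain U where U: "U \<in> OpX" "{x \<in> X. f x \<in> K} \<subseteq> U" "U \<subseteq> {x \<in> X. f x \<in> G}"
    using w_continuous_open_between[OF assms(1) K G] by blast
  show ?thesis
  proof (cases "X - U \<in> p")
    case True
    have "f ` (X - U) \<subseteq> Y - K" using U(2) maps_to by blast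
    then show ?thesis using True by blast
  next
    case False
    then obtain C where "C \<in> p" "C \<inter> (X - U) = {}"
      using wallman_points_disjoint[OF gts_X p Diff_in_Cl[OF U(1)]] by blast
    moreover have "C \<subseteq> X" using wallman_pointsD(5)[OF gts_X p \<open>C \<in> p\<close>] .
    ultimately have "f ` C \<subseteq> G" using U(3) by blast
    then show ?thesis using \<open>C \<in> p\<close> by blast
  qed
qed

end

locale w_continuous_gts_map = gts_map +
  assumes w_continuous: "w_continuous X OpX Y OpY f"
    and normal_Y: "weakly_normal Y OpY"
    and compact_Y: "compact_space (wallman_topology Y OpY)"
begin

text \<open>Two distinct ultrafilters contain disjoint closed sets B1, B2, separated by open V1, V2;
  separating B1 from Y - V1 as well, w-continuity applied to the cover by V1 and an open
  neighbourhood of Y - V1 forces the image filter to contain a closed set disjoint from B1 or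
  from B2.\<close>
lemma image_filter_unique:
  assumes p: "p \<in> WX" and q: "q1 \<in> WY" "q2 \<in> WY"
    and sub: "image_filter Y OpY f p \<subseteq> q1" "image_filter Y OpY f p \<subseteq> q2"
  shows "q1 = q2"
proof (rule ccontr)
  assume "q1 \<noteq> q2"
  moreover have "q1 \<subseteq> q2 \<Longrightarrow> q2 = q1"
    using wallman_pointsD(1,2)[OF gts_Y] q unfolding ultrafilter_in_def by blast
  ultimately obtain B1 where B1: "B1 \<in> q1" "B1 \<notin> q2" by blast
  have B1_Cl: "B1 \<in> Cl Y OpY" using wallman_pointsD(4)[OF gts_Y q(1) B1(1)] .
  obtain B2 where B2: "B2 \<in> q2" "B2 \<inter> B1 = {}"
    using wallman_points_disjoint[OF gts_Y q(2) B1_Cl B1(2)] by blast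
  have B2_Cl: "B2 \<in> Cl Y OpY" using wallman_pointsD(4)[OF gts_Y q(2) B2(1)] .
  obtain V1 V2 where V: "V1 \<in> OpY" "V2 \<in> OpY" "B1 \<subseteq> V1" "B2 \<subseteq> V2" "V1 \<inter> V2 = {}"
    using weakly_normal_Cl[OF normal_Y B1_Cl B2_Cl] B2(2) by blast
  have "B1 \<inter> (Y - V1) = {}" using V(3) by blast
  then obtain G H where GH: "G \<in> OpY" "H \<in> OpY" "B1 \<subseteq> G" "Y - V1 \<subseteq> H" "G \<inter> H = {}"
    using weakly_normal_Cl[OF normal_Y B1_Cl Diff_in_Cl[OF V(1)]] by blast
  have "V1 \<subseteq> Y" "H \<subseteq> Y" using gts_opens(1)[OF gts_Y] V(1) GH(2) by blast+
  have in_q: "K \<in> q1" "K \<in> q2" if "C \<in> p" "f ` C \<subseteq> K" "K \<in> Cl Y OpY" for C K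
    using that sub unfolding image_filter_def by blast+
  consider C where "C \<in> p" "f ` C \<subseteq> H" | C where "C \<in> p" "f ` C \<subseteq> Y - (Y - V1)"
    using image_filter_separates[OF w_continuous p Diff_in_Cl[OF V(1)] GH(2,4)] by blast
  then show False
  proof cases
    case 1
    then have "f ` C \<subseteq> Y - G" using GH(5) \<open>H \<subseteq> Y\<close> by blast
    then have "Y - G \<in> q1" using in_q(1)[OF \<open>C \<in> p\<close> _ Diff_in_Cl[OF GH(1)]] by blast
    then show False
      using filter_in_Int_nonempty[OF wallman_pointsD(2)[OF gts_Y q(1)] _ B1(1)] GH(3) by blast
  next
    case 2
    then have "f ` C \<subseteq> Y - V2" using V(5) by blast
    then have "Y - V2 \<in> q2" using in_q(2)[OF \<open>C \<in> p\<close> _ Diff_in_Cl[OF V(2)]] by blast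
    then show False
      using filter_in_Int_nonempty[OF wallman_pointsD(2)[OF gts_Y q(2)] _ B2(1)] V(4) by blast
  qed
qed

lemma wallman_map_ultrafilter:
  assumes p: "p \<in> WX"
  shows "wallman_map Y OpY f p \<in> WY" "image_filter Y OpY f p \<subseteq> wallman_map Y OpY f p"
proof -
  have "K \<inter> Y \<noteq> {}" if "K \<in> image_filter Y OpY f p" for K
  proof -
    have "K \<noteq> {}" using that filter_inD(2)[OF filter_in_image_filter[OF p]] by blast
    moreover have "K \<subseteq> Y" using that Cl_subset[OF gts_Y] unfolding image_filter_def by blast
    ultimately show ?thesis by blast
  qed
  then obtain q where "q \<in> WY" "image_filter Y OpY f p \<subseteq> q"
    using compact_wallman_filter_extends[OF gts_Y normal_Y compact_Y filter_in_image_filter[OF p]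
        Cl_top[OF gts_Y]] by blast
  then have "\<exists>q. q \<in> WY \<and> image_filter Y OpY f p \<subseteq> q" by blast
  from someI_ex[OF this]
  show "wallman_map Y OpY f p \<in> WY" "image_filter Y OpY f p \<subseteq> wallman_map Y OpY f p"
    unfolding wallman_map_def by blast+
qed

lemma wallman_map_avoids:
  assumes p: "p \<in> WX" and B: "B \<in> Cl Y OpY" "B \<notin> wallman_map Y OpY f p"
  shows "\<exists>K\<in>image_filter Y OpY f p. K \<inter> B = {}"
proof (rule ccontr)
  assume "\<not> (\<exists>K\<in>image_filter Y OpY f p. K \<inter> B = {})"
  then obtain q where q: "q \<in> WY" "image_filter Y OpY f p \<subseteq> q" "B \<in> q"
    using compact_wallman_filter_extends[OF gts_Y normal_Y compact_Y filter_in_image_filter[OF p] B(1)]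
    by blast
  have "q = wallman_map Y OpY f p"
    using image_filter_unique[OF p q(1) wallman_map_ultrafilter(1)[OF p] q(2) wallman_map_ultrafilter(2)[OF p]] .
  then show False using B(2) q(3) by simp
qed

lemma wallman_map_w_map:
  assumes normal_X: "weakly_normal X OpX" and x: "x \<in> X"
  shows "wallman_map Y OpY f (w_map X OpX x) = w_map Y OpY (f x)"
proof -
  have w: "w_map X OpX x \<in> WX" using w_map_in_wallman_points[OF gts_X normal_X x] .
  have "w_map Y OpY (f x) \<in> WY" using w_map_in_wallman_points[OF gts_Y normal_Y] maps_to x by blast
  moreover have "image_filter Y OpY f (w_map X OpX x) \<subseteq> w_map Y OpY (f x)"
    unfolding image_filter_def w_map_def by blast
  ultimately show ?thesis
    using image_filter_unique[OF w wallman_map_ultrafilter(1)[OF w] _ wallman_map_ultrafilter(2)[OF w]] by blast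
qed

text \<open>If B \<notin> F p, the image filter of p contains a closed K disjoint from B; separating K
  from B and pulling the open neighbourhood of K back along f gives a basic neighbourhood of p.\<close>
lemma wallman_map_basic_nbhd:
  assumes p: "p \<in> WX" and B: "B \<in> Cl Y OpY" "B \<notin> wallman_map Y OpY f p"
  shows "\<exists>A\<in>Cl X OpX. A \<notin> p \<and> (\<forall>p'\<in>WX. A \<notin> p' \<longrightarrow> B \<notin> wallman_map Y OpY f p')"
proof -
  obtain K where K: "K \<in> image_filter Y OpY f p" "K \<inter> B = {}"
    using wallman_map_avoids[OF p B] by blast
  then obtain C where C: "C \<in> p" "f ` C \<subseteq> K" and K_Cl: "K \<in> Cl Y OpY"
    unfolding image_filter_def by blast
  obtain GK GB where G: "GK \<in> OpY" "GB \<in> OpY" "K \<subseteq> GK" "B \<subseteq> GB" "GK \<inter> GB = {}"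
    using weakly_normal_Cl[OF normal_Y K_Cl B(1) K(2)] by blast
  obtain U where U: "U \<in> OpX" "{x \<in> X. f x \<in> K} \<subseteq> U" "U \<subseteq> {x \<in> X. f x \<in> GK}"
    using w_continuous_open_between[OF w_continuous K_Cl G(1,3)] by blast
  have "X - U \<notin> p"
  proof
    assume "X - U \<in> p"
    moreover have "C \<inter> (X - U) = {}" using C(2) U(2) wallman_pointsD(5)[OF gts_X p C(1)] by blast
    ultimately show False using filter_in_Int_nonempty[OF wallman_pointsD(2)[OF gts_X p] C(1)] by blast
  qed
  moreover have "B \<notin> wallman_map Y OpY f p'" if p': "p' \<in> WX" "X - U \<notin> p'" for p'
  proof
    assume B': "B \<in> wallman_map Y OpY f p'"
    obtain C' where C': "C' \<in> p'" "C' \<inter> (X - U) = {}"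
      using wallman_points_disjoint[OF gts_X p'(1) Diff_in_Cl[OF U(1)] p'(2)] by blast
    then have "C' \<subseteq> U" using wallman_pointsD(5)[OF gts_X p'(1) C'(1)] by blast
    moreover have "GK \<subseteq> Y" using gts_opens(1)[OF gts_Y] G(1) by blast
    ultimately have "f ` C' \<subseteq> Y - GB" using U(3) G(5) by blast
    then have "Y - GB \<in> wallman_map Y OpY f p'"
      using wallman_map_ultrafilter(2)[OF p'(1)] Diff_in_Cl[OF G(2)] C'(1) unfolding image_filter_def by blast
    then show False
      using filter_in_Int_nonempty[OF wallman_pointsD(2)[OF gts_Y wallman_map_ultrafilter(1)[OF p'(1)]] _ B'] G(4)
      by blast
  qed
  ultimately show ?thesis using Diff_in_Cl[OF U(1)] by blast
qed

lemma continuous_map_wallman_map: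
  "continuous_map (wallman_topology X OpX) (wallman_topology Y OpY) (wallman_map Y OpY f)"
proof -
  have "openin (wallman_topology X OpX) {p \<in> WX. B \<notin> wallman_map Y OpY f p}"
    if B: "B \<in> Cl Y OpY" for B
    unfolding openin_subopen[of _ "{p \<in> WX. B \<notin> wallman_map Y OpY f p}"]
  proof
    fix p assume p: "p \<in> {p \<in> WX. B \<notin> wallman_map Y OpY f p}"
    then obtain A where A: "A \<in> Cl X OpX" "A \<notin> p"
      "\<forall>p'\<in>WX. A \<notin> p' \<longrightarrow> B \<notin> wallman_map Y OpY f p'"
      using wallman_map_basic_nbhd[OF _ B] by blast
    have "openin (wallman_topology X OpX) (WX - wallman_bracket X OpX A)"
      using openin_wallman_basic[OF A(1)] .
    moreover have "p \<in> WX - wallman_bracket X OpX A"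
      using p A(2) unfolding wallman_bracket_def by blast
    moreover have "WX - wallman_bracket X OpX A \<subseteq> {p \<in> WX. B \<notin> wallman_map Y OpY f p}"
      using A(3) unfolding wallman_bracket_def by blast
    ultimately show "\<exists>T. openin (wallman_topology X OpX) T \<and> p \<in> T \<and>
        T \<subseteq> {p \<in> WX. B \<notin> wallman_map Y OpY f p}" by blast
  qed
  moreover have "\<forall>p\<in>WX. wallman_map Y OpY f p \<in> WY" using wallman_map_ultrafilter(1) by blast
  ultimately show ?thesis using continuous_map_wallman_topology_iff[OF gts_X gts_Y] by blast
qed

lemma weakly_continuous_wallman_extension_wallman_map:
  assumes "weakly_normal X OpX"
  shows "weakly_continuous_wallman_extension X OpX Y OpY f (wallman_map Y OpY f)"
  unfolding weakly_continuous_wallman_extension_def wallman_extension_def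
  using wallman_map_ultrafilter(1) wallman_map_w_map[OF assms] continuous_map_wallman_map by blast

end

theorem theorem8p10:
  fixes X :: "'a set" and OpX :: "'a set set" and CovX :: "'a set set set"
    and Y :: "'b set" and OpY :: "'b set set" and CovY :: "'b set set set"
    and f :: "'a \<Rightarrow> 'b"
  assumes "gts X OpX CovX" and "gts Y OpY CovY"
    and "weakly_normal X OpX" and "weakly_normal Y OpY"
    and "compact_space (wallman_topology X OpX)"
    and "compact_space (wallman_topology Y OpY)"
    and "\<forall>x\<in>X. f x \<in> Y"
  shows "(\<exists>F. weakly_continuous_wallman_extension X OpX Y OpY f F) \<longleftrightarrow> w_continuous X OpX Y OpY f"
proof
  interpret gts_map X OpX CovX Y OpY CovY f
    using assms(1,2,7) by unfold_locales
  assume "\<exists>F. weakly_continuous_wallman_extension X OpX Y OpY f F"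
  then show "w_continuous X OpX Y OpY f"
    using w_continuous_if_weakly_continuous_extension[OF assms(3,5)] by blast
next
  assume "w_continuous X OpX Y OpY f"
  then interpret w_continuous_gts_map X OpX CovX Y OpY CovY f
    using assms by unfold_locales
  show "\<exists>F. weakly_continuous_wallman_extension X OpX Y OpY f F"
    using weakly_continuous_wallman_extension_wallman_map[OF assms(3)] by blast
qed

end
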